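(* Let $\Phi$ be of type $C_n$ and let $I$ be an abelian ideal. Then $I\in\mathcal I_{ab}(\alpha_n)$ if and only if $\alpha_{1,n}\in I$, where $\alpha_{1,n}=\alpha_1+\cdots+\alpha_n$.
   Context: $\Phi$ is the root system of type $C_n$ with simple roots $\alpha_1,\dots,\alpha_n$ numbered as in Bourbaki ($\alpha_n$ long), positive roots $\Phi^+$, highest root $\theta=2\alpha_1+\cdots+2\alpha_{n-1}+\alpha_n$, inner product $(-,-)$. The root poset is $\Phi^+$ with $\beta\ge\gamma$ iff $\beta-\gamma$ is a nonnegative integer combination of simple roots. An abelian ideal is a subset $I\subseteq\Phi^+$ closed upward in the root poset with $(I+I)\cap\Phi=\emptyset$. Affine setup: adjoin $\delta$ with the form extended to have kernel $\mathbb R\delta$; $\widehat\Phi=\Phi+\mathbb Z\delta$, $\widehat\Pi=\{\alpha_1,\dots,\alpha_n,-\theta+\delta\}$, $\widehat\Phi^+=\Phi^+\cup(\Phi+\mathbb Z_{>0}\delta)$, $\widehat W$ generated by reflections $s_\gamma(x)=x-\frac{2(x,\gamma)}{(\gamma,\gamma)}\gamma$, $\gamma\in\widehat\Pi$; $N(w)=\{\beta\in\widehat\Phi^+\mid w^{-1}(\beta)\in-\widehat\Phi^+\}$. For an abelian ideal $I$, $w_I$ is the unique element of $\widehat W$ with $N(w_I)=\{-\beta+\delta\mid\beta\in I\}$; for a long root $\alpha\in\Phi^+$, $\mathcal I_{ab}(\alpha)=\{I\mid w_I^{-1}(-\theta+2\delta)=\alpha\}$. *)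

theory Defs
  imports Complex_Main
begin

text \<open>Vectors of the ambient Euclidean space R^n are functions nat => real,
  coordinates indexed by 1..n (all other coordinates are 0 for every vector that occurs).\<close>

type_synonym vec = "nat \<Rightarrow> real"

definition ev :: "nat \<Rightarrow> vec" where
  "ev i = (\<lambda>j. if j = i then 1 else 0)"

definition vadd :: "vec \<Rightarrow> vec \<Rightarrow> vec" where
  "vadd v w = (\<lambda>j. v j + w j)"

definition vsub :: "vec \<Rightarrow> vec \<Rightarrow> vec" where
  "vsub v w = (\<lambda>j. v j - w j)"

definition vneg :: "vec \<Rightarrow> vec" where
  "vneg v = (\<lambda>j. - v j)"

definition vscale :: "real \<Rightarrow> vec \<Rightarrow> vec" where
  "vscale c v = (\<lambda>j. c * v j)"

definition inner_C :: "nat \<Rightarrow> vec \<Rightarrow> vec \<Rightarrow> real" where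
  "inner_C n v w = (\<Sum>j\<in>{1..n}. v j * w j)"

definition roots_C :: "nat \<Rightarrow> vec set" where
  "roots_C n =
     {vsub (ev i) (ev j) | i j. i \<in> {1..n} \<and> j \<in> {1..n} \<and> i \<noteq> j}
   \<union> {vadd (ev i) (ev j) | i j. i \<in> {1..n} \<and> j \<in> {1..n} \<and> i \<noteq> j}
   \<union> {vneg (vadd (ev i) (ev j)) | i j. i \<in> {1..n} \<and> j \<in> {1..n} \<and> i \<noteq> j}
   \<union> {vscale 2 (ev i) | i. i \<in> {1..n}}
   \<union> {vscale (-2) (ev i) | i. i \<in> {1..n}}"

definition simple_root :: "nat \<Rightarrow> nat \<Rightarrow> vec" where
  "simple_root n i = (if i < n then vsub (ev i) (ev (Suc i)) else vscale 2 (ev n))"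

definition pos_roots_C :: "nat \<Rightarrow> vec set" where
  "pos_roots_C n =
     {vsub (ev i) (ev j) | i j. 1 \<le> i \<and> i < j \<and> j \<le> n}
   \<union> {vadd (ev i) (ev j) | i j. 1 \<le> i \<and> i < j \<and> j \<le> n}
   \<union> {vscale 2 (ev i) | i. i \<in> {1..n}}"

text \<open>Highest root theta = 2 alpha_1 + ... + 2 alpha_(n-1) + alpha_n = 2 e_1.\<close>
definition theta_C :: "nat \<Rightarrow> vec" where
  "theta_C n = (\<lambda>j. (\<Sum>i\<in>{1..<n}. 2 * simple_root n i j) + simple_root n n j)"

definition alpha_1n :: "nat \<Rightarrow> vec" where
  "alpha_1n n = (\<lambda>j. \<Sum>i\<in>{1..n}. simple_root n i j)"

definition root_ge :: "nat \<Rightarrow> vec \<Rightarrow> vec \<Rightarrow> bool" where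
  "root_ge n \<beta> \<gamma> \<longleftrightarrow>
     (\<exists>c :: nat \<Rightarrow> nat. vsub \<beta> \<gamma> = (\<lambda>j. \<Sum>i\<in>{1..n}. real (c i) * simple_root n i j))"

definition abelian_ideal :: "nat \<Rightarrow> vec set \<Rightarrow> bool" where
  "abelian_ideal n I \<longleftrightarrow>
     I \<subseteq> pos_roots_C n
   \<and> (\<forall>\<beta>\<in>I. \<forall>\<gamma>\<in>pos_roots_C n. root_ge n \<gamma> \<beta> \<longrightarrow> \<gamma> \<in> I)
   \<and> (\<forall>\<beta>\<in>I. \<forall>\<gamma>\<in>I. vadd \<beta> \<gamma> \<notin> roots_C n)"

text \<open>An element of V + R delta is a pair (v, c) standing for v + c delta.
  The form is extended with kernel R delta.\<close>
type_synonym avec = "vec \<times> real"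

definition aform :: "nat \<Rightarrow> avec \<Rightarrow> avec \<Rightarrow> real" where
  "aform n x y = inner_C n (fst x) (fst y)"

definition aneg :: "avec \<Rightarrow> avec" where
  "aneg x = (vneg (fst x), - snd x)"

definition areflect :: "nat \<Rightarrow> avec \<Rightarrow> avec \<Rightarrow> avec" where
  "areflect n \<gamma> x =
     (let c = 2 * aform n x \<gamma> / aform n \<gamma> \<gamma>
      in (vsub (fst x) (vscale c (fst \<gamma>)), snd x - c * snd \<gamma>))"

definition aff_roots :: "nat \<Rightarrow> avec set" where
  "aff_roots n = {(\<beta>, real_of_int k) | \<beta> k. \<beta> \<in> roots_C n}"

definition aff_pos_roots :: "nat \<Rightarrow> avec set" where
  "aff_pos_roots n = {(\<beta>, 0) | \<beta>. \<beta> \<in> pos_roots_C n}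
     \<union> {(\<beta>, real_of_int k) | \<beta> k. \<beta> \<in> roots_C n \<and> k > 0}"

definition aff_simple_roots :: "nat \<Rightarrow> avec set" where
  "aff_simple_roots n = {(simple_root n i, 0) | i. i \<in> {1..n}} \<union> {(vneg (theta_C n), 1)}"

inductive_set aff_weyl :: "nat \<Rightarrow> (avec \<Rightarrow> avec) set" for n where
  id_in: "id \<in> aff_weyl n"
| refl_comp: "w \<in> aff_weyl n \<Longrightarrow> \<gamma> \<in> aff_simple_roots n \<Longrightarrow> areflect n \<gamma> \<circ> w \<in> aff_weyl n"

definition inv_set :: "nat \<Rightarrow> (avec \<Rightarrow> avec) \<Rightarrow> avec set" where
  "inv_set n w = {\<beta> \<in> aff_pos_roots n. inv w \<beta> \<in> aneg ` aff_pos_roots n}"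

definition w_ideal :: "nat \<Rightarrow> vec set \<Rightarrow> (avec \<Rightarrow> avec)" where
  "w_ideal n I = (THE w. w \<in> aff_weyl n \<and> inv_set n w = {(vneg \<beta>, 1) | \<beta>. \<beta> \<in> I})"

definition I_ab :: "nat \<Rightarrow> vec \<Rightarrow> vec set set" where
  "I_ab n \<alpha> = {I. abelian_ideal n I \<and> inv (w_ideal n I) (vneg (theta_C n), 2) = (\<alpha>, 0)}"

end

theory Submission
  imports Defs "HOL-Combinatorics.Transposition"
begin

text \<open>The affine Weyl group of type C_n acts on x + c\<delta> by signed permutations of the
  coordinates combined with integral translations, (x, c) \<mapsto> (\<sigma> x, c + \<langle>m, x\<rangle>); such a map
  that keeps every positive affine root positive is the identity, so an element is determined
  by its inversion set. Adding roots of minimal height one at a time shows that every abelian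
  ideal is I = {e_i + e_j : i \<le> j \<le> p} \<union> {e_i + e_j : i \<le> p < j, \<rho> j < \<rho> i} for some p and some
  permutation \<rho> decreasing on {1..p} and increasing on {p+1..n}. The map E sending e_i to
  -e_(\<rho> i) + \<delta> for i \<le> p and to e_(\<rho> i) for i > p is a product of simple reflections, and the
  positive affine roots it makes negative are exactly -\<beta> + \<delta> with \<beta> \<in> I, so w_I = E\<inverse>.
  Finally E(-\<theta> + 2\<delta>) = E(-2e_1 + 2\<delta>) equals \<alpha>_n = 2e_n exactly when p \<ge> 1 and \<rho> 1 = n, which
  is exactly the condition e_1 + e_n = \<alpha>_(1,n) \<in> I.\<close>

section \<open>Roots of type C_n in coordinates\<close>

definition epair :: "real \<Rightarrow> nat \<Rightarrow> real \<Rightarrow> nat \<Rightarrow> vec" where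
  "epair a k b l = vadd (vscale a (ev k)) (vscale b (ev l))"

lemma epair_apply: "epair a k b l t = (if t = k then a else 0) + (if t = l then b else 0)"
  by (simp add: epair_def vadd_def vscale_def ev_def)

lemma epair_swap: "epair a k b l = epair b l a k"
  by (auto simp: fun_eq_iff epair_apply)

lemma vneg_epair: "vneg (epair a k b l) = epair (-a) k (-b) l"
  by (auto simp: fun_eq_iff vneg_def epair_apply)

lemma epair_eqs:
  "vsub (ev i) (ev j) = epair 1 i (-1) j"
  "vadd (ev i) (ev j) = epair 1 i 1 j"
  "vneg (vadd (ev i) (ev j)) = epair (-1) i (-1) j"
  "vscale 2 (ev i) = epair 1 i 1 i"
  "vscale (-2) (ev i) = epair (-1) i (-1) i"
  by (auto simp: fun_eq_iff epair_apply vsub_def vadd_def vneg_def vscale_def ev_def)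

lemma inner_C_epair:
  "k \<in> {1..n} \<Longrightarrow> l \<in> {1..n} \<Longrightarrow> inner_C n y (epair a k b l) = a * y k + b * y l"
  by (simp add: inner_C_def epair_apply distrib_left sum.distrib if_distrib[of "\<lambda>x. _ * x"]
      sum.delta cong: if_cong)

lemma inner_C_vneg: "inner_C n y (vneg x) = - inner_C n y x"
  by (simp add: inner_C_def vneg_def sum_negf)

lemma roots_C_eq:
  "roots_C n = {epair a k b l | a k b l. (a = 1 \<or> a = -1) \<and> (b = 1 \<or> b = -1)
     \<and> k \<in> {1..n} \<and> l \<in> {1..n} \<and> (k = l \<longrightarrow> a = b)}" (is "_ = ?R")
proof
  show "roots_C n \<subseteq> ?R"
    unfolding roots_C_def epair_eqs vneg_epair by blast
next
  show "?R \<subseteq> roots_C n"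
  proof
    fix x assume "x \<in> ?R"
    then obtain a k b l where x: "x = epair a k b l" "a = 1 \<or> a = -1" "b = 1 \<or> b = -1"
      "k \<in> {1..n}" "l \<in> {1..n}" "k = l \<longrightarrow> a = b" by blast
    then consider "a = 1" "b = 1" | "a = 1" "b = -1" "k \<noteq> l" | "a = -1" "b = 1" "k \<noteq> l"
      | "a = -1" "b = -1" by blast
    then show "x \<in> roots_C n"
      unfolding roots_C_def epair_eqs vneg_epair
      by cases (use x epair_swap in \<open>(cases "k = l"; blast)+\<close>)
  qed
qed

lemma epair_in_roots_C:
  "a = 1 \<or> a = -1 \<Longrightarrow> b = 1 \<or> b = -1 \<Longrightarrow> k \<in> {1..n} \<Longrightarrow> l \<in> {1..n} \<Longrightarrow> (k = l \<longrightarrow> a = b)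
   \<Longrightarrow> epair a k b l \<in> roots_C n"
  unfolding roots_C_eq by blast

lemma roots_CE:
  assumes "x \<in> roots_C n"
  obtains a k b l where "x = epair a k b l" "a = 1 \<or> a = -1" "b = 1 \<or> b = -1"
    "k \<in> {1..n}" "l \<in> {1..n}" "k = l \<longrightarrow> a = b"
  using assms unfolding roots_C_eq by blast

lemma vneg_in_roots_C: "x \<in> roots_C n \<Longrightarrow> vneg x \<in> roots_C n"
  by (erule roots_CE) (auto simp: vneg_epair intro!: epair_in_roots_C)

lemma finite_roots_C: "finite (roots_C n)"
proof -
  have "roots_C n \<subseteq> (\<lambda>(a, k, b, l). epair a k b l) ` ({1, -1} \<times> {1..n} \<times> {1, -1} \<times> {1..n})"
  proof
    fix x assume "x \<in> roots_C n"
    then obtain a k b l where "x = epair a k b l" "a = 1 \<or> a = -1" "b = 1 \<or> b = -1"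
      "k \<in> {1..n}" "l \<in> {1..n}" by (rule roots_CE)
    then show "x \<in> (\<lambda>(a, k, b, l). epair a k b l) ` ({1, -1} \<times> {1..n} \<times> {1, -1} \<times> {1..n})"
      by (intro image_eqI[where x = "(a, k, b, l)"]) auto
  qed
  then show ?thesis by (rule finite_subset) simp
qed

definition weight :: "nat \<Rightarrow> nat \<Rightarrow> real" where
  "weight n k = real n + 1 - real k"

text \<open>Not the usual height (it takes the value 2 on the long simple root), but a linear form
  that is positive on all simple roots, which is all that is needed.\<close>
definition height :: "nat \<Rightarrow> vec \<Rightarrow> real" where
  "height n x = inner_C n (weight n) x"

lemma weight_pos: "k \<in> {1..n} \<Longrightarrow> 0 < weight n k"
  by (auto simp: weight_def)

lemma height_epair:
  "k \<in> {1..n} \<Longrightarrow> l \<in> {1..n} \<Longrightarrow> height n (epair a k b l) = a * weight n k + b * weight n l"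
  by (simp add: height_def inner_C_epair)

lemma height_vneg: "height n (vneg x) = - height n x"
  by (simp add: height_def inner_C_vneg)

lemma height_root_nonzero: "x \<in> roots_C n \<Longrightarrow> height n x \<noteq> 0"
  unfolding roots_C_eq by (auto simp: height_epair weight_def)

lemma pos_roots_C_eq: "pos_roots_C n = {x \<in> roots_C n. 0 < height n x}"
proof (intro equalityI subsetI)
  fix x assume "x \<in> pos_roots_C n"
  then show "x \<in> {x \<in> roots_C n. 0 < height n x}"
    unfolding pos_roots_C_def epair_eqs
    by (elim UnE CollectE exE conjE) (auto intro!: epair_in_roots_C simp: height_epair weight_def)
next
  fix x assume "x \<in> {x \<in> roots_C n. 0 < height n x}"
  then obtain a k b l where x: "x = epair a k b l" "a = 1 \<or> a = -1" "b = 1 \<or> b = -1"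
    "k \<in> {1..n}" "l \<in> {1..n}" "k = l \<longrightarrow> a = b" and h: "0 < a * weight n k + b * weight n l"
    unfolding roots_C_eq by (auto simp: height_epair)
  have swap: "x = epair b l a k" using x(1) epair_swap by simp
  have "(a = 1 \<and> b = 1 \<and> k \<le> l) \<or> (a = 1 \<and> b = 1 \<and> l < k) \<or> (a = 1 \<and> b = -1 \<and> k < l)
    \<or> (a = -1 \<and> b = 1 \<and> l < k)"
    using x(2,3,4,5) h by (auto simp: weight_def)
  then show "x \<in> pos_roots_C n"
    unfolding pos_roots_C_def epair_eqs
  proof (elim disjE conjE, goal_cases)
    case 1
    show ?case
    proof (cases "k = l")
      case True then show ?thesis using 1 x by auto
    next
      case False
      then have "x \<in> {epair 1 i 1 j |i j. 1 \<le> i \<and> i < j \<and> j \<le> n}"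
        using 1 x(1,4,5) by (intro CollectI exI conjI) auto
      then show ?thesis by blast
    qed
  next
    case 2
    then show ?case using swap x(4,5) by auto
  next
    case 3
    then show ?case using x(1,4,5) by auto
  next
    case 4
    then show ?case using swap x(4,5) by auto
  qed
qed

section \<open>Affine roots and the affine Weyl group\<close>

lemma aff_roots_iff: "(x, c) \<in> aff_roots n \<longleftrightarrow> x \<in> roots_C n \<and> c \<in> \<int>"
  unfolding aff_roots_def by (auto elim: Ints_cases)

lemma aff_pos_roots_iff:
  "(x, c) \<in> aff_pos_roots n \<longleftrightarrow> x \<in> roots_C n \<and> c \<in> \<int> \<and> (0 < c \<or> (c = 0 \<and> 0 < height n x))"
proof
  assume "(x, c) \<in> aff_pos_roots n"
  then show "x \<in> roots_C n \<and> c \<in> \<int> \<and> (0 < c \<or> (c = 0 \<and> 0 < height n x))"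
    unfolding aff_pos_roots_def pos_roots_C_eq by auto
next
  assume x: "x \<in> roots_C n \<and> c \<in> \<int> \<and> (0 < c \<or> (c = 0 \<and> 0 < height n x))"
  then obtain k where "c = of_int k" by (auto elim: Ints_cases)
  with x show "(x, c) \<in> aff_pos_roots n"
    unfolding aff_pos_roots_def pos_roots_C_eq by auto
qed

lemma aff_pos_roots_subset: "aff_pos_roots n \<subseteq> aff_roots n"
  by (auto simp: aff_pos_roots_iff aff_roots_iff)

lemma aneg_aneg [simp]: "aneg (aneg z) = z"
  by (simp add: aneg_def vneg_def)

lemma aneg_image_iff: "z \<in> aneg ` S \<longleftrightarrow> aneg z \<in> S"
  by (metis aneg_aneg image_iff)

lemma aff_pos_roots_iff_aneg:
  assumes "z \<in> aff_roots n"
  shows "z \<in> aff_pos_roots n \<longleftrightarrow> aneg z \<notin> aff_pos_roots n"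
proof -
  obtain x c where z: "z = (x, c)" "x \<in> roots_C n" "c \<in> \<int>"
    using assms by (metis aff_roots_iff surj_pair)
  then show ?thesis
    using vneg_in_roots_C[OF z(2)] height_root_nonzero[OF z(2)]
    by (auto simp: aneg_def aff_pos_roots_iff height_vneg)
qed

text \<open>signed_perm n \<rho> s sends e_i to s i \<cdot> e_(\<rho> i) for i \<in> {1..n}.\<close>

definition signed_perm :: "nat \<Rightarrow> (nat \<Rightarrow> nat) \<Rightarrow> (nat \<Rightarrow> real) \<Rightarrow> vec \<Rightarrow> vec" where
  "signed_perm n \<rho> s x =
     (\<lambda>t. if t \<in> {1..n} then \<Sum>i\<in>{1..n}. if \<rho> i = t then s i * x i else 0 else x t)"

definition affine_perm :: "nat \<Rightarrow> (nat \<Rightarrow> nat) \<Rightarrow> (nat \<Rightarrow> real) \<Rightarrow> (nat \<Rightarrow> real) \<Rightarrow> avec \<Rightarrow> avec" where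
  "affine_perm n \<rho> s m z = (signed_perm n \<rho> s (fst z), snd z + inner_C n m (fst z))"

definition affine_perm_data :: "nat \<Rightarrow> (nat \<Rightarrow> nat) \<Rightarrow> (nat \<Rightarrow> real) \<Rightarrow> (nat \<Rightarrow> real) \<Rightarrow> bool" where
  "affine_perm_data n \<rho> s m \<longleftrightarrow>
     bij_betw \<rho> {1..n} {1..n} \<and> (\<forall>i\<in>{1..n}. s i = 1 \<or> s i = -1) \<and> (\<forall>i\<in>{1..n}. m i \<in> \<int>)"

lemma signed_perm_epair:
  assumes "k \<in> {1..n}" "l \<in> {1..n}" "\<rho> ` {1..n} \<subseteq> {1..n}"
  shows "signed_perm n \<rho> s (epair a k b l) = epair (s k * a) (\<rho> k) (s l * b) (\<rho> l)"
proof
  fix t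
  have "(\<Sum>i\<in>{1..n}. if \<rho> i = t then s i * epair a k b l i else 0)
      = (\<Sum>i\<in>{1..n}. (if i = k then (if \<rho> i = t then s i * a else 0) else 0)
                     + (if i = l then (if \<rho> i = t then s i * b else 0) else 0))"
    by (rule sum.cong) (auto simp: epair_apply algebra_simps)
  also have "\<dots> = (if \<rho> k = t then s k * a else 0) + (if \<rho> l = t then s l * b else 0)"
    using assms(1,2) by (simp add: sum.distrib sum.delta)
  moreover have "\<rho> k \<in> {1..n}" "\<rho> l \<in> {1..n}"
    using assms by blast+
  ultimately show "signed_perm n \<rho> s (epair a k b l) t = epair (s k * a) (\<rho> k) (s l * b) (\<rho> l) t"
    using assms(1,2) by (cases "t \<in> {1..n}") (auto simp: signed_perm_def epair_apply mult.commute)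
qed

lemma signed_perm_vneg: "signed_perm n \<rho> s (vneg x) = vneg (signed_perm n \<rho> s x)"
  by (auto simp: fun_eq_iff signed_perm_def vneg_def sum_negf[symmetric] intro!: sum.cong)

lemma signed_perm_id: "signed_perm n id (\<lambda>_. 1) x = x"
  by (auto simp: fun_eq_iff signed_perm_def sum.delta)

lemma affine_perm_epair:
  assumes "affine_perm_data n \<rho> s m" "k \<in> {1..n}" "l \<in> {1..n}"
  shows "affine_perm n \<rho> s m (epair a k b l, c)
    = (epair (s k * a) (\<rho> k) (s l * b) (\<rho> l), c + a * m k + b * m l)"
  using assms by (simp add: affine_perm_def affine_perm_data_def bij_betw_def signed_perm_epair
      inner_C_epair)

lemma affine_perm_aneg: "affine_perm n \<rho> s m (aneg z) = aneg (affine_perm n \<rho> s m z)"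
  by (simp add: affine_perm_def aneg_def signed_perm_vneg inner_C_vneg)

lemma affine_perm_id: "affine_perm n id (\<lambda>_. 1) (\<lambda>_. 0) = id"
  by (simp add: fun_eq_iff affine_perm_def signed_perm_id inner_C_def)

lemma affine_perm_cong:
  assumes "\<And>i. i \<in> {1..n} \<Longrightarrow> \<rho> i = \<rho>' i \<and> s i = s' i \<and> m i = m' i"
  shows "affine_perm n \<rho> s m = affine_perm n \<rho>' s' m'"
  using assms by (auto simp: fun_eq_iff affine_perm_def signed_perm_def inner_C_def
      intro!: sum.cong)

lemma affine_perm_aff_roots:
  assumes data: "affine_perm_data n \<rho> s m" and z: "z \<in> aff_roots n"
  shows "affine_perm n \<rho> s m z \<in> aff_roots n"
proof -
  obtain x c where zc: "z = (x, c)" "x \<in> roots_C n" "c \<in> \<int>"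
    using z by (metis aff_roots_iff surj_pair)
  then obtain a k b l where x: "x = epair a k b l" "a = 1 \<or> a = -1" "b = 1 \<or> b = -1"
    "k \<in> {1..n}" "l \<in> {1..n}" "k = l \<longrightarrow> a = b" by (elim roots_CE)
  have \<rho>: "inj_on \<rho> {1..n}" "\<rho> k \<in> {1..n}" "\<rho> l \<in> {1..n}"
    using data x(4,5) by (auto simp: affine_perm_data_def bij_betw_def)
  then have "\<rho> k = \<rho> l \<longrightarrow> k = l" using x(4,5) by (auto dest: inj_onD)
  then have "epair (s k * a) (\<rho> k) (s l * b) (\<rho> l) \<in> roots_C n"
    using data x \<rho> by (intro epair_in_roots_C) (auto simp: affine_perm_data_def)
  moreover have "c + a * m k + b * m l \<in> \<int>"
    using data x zc(3) by (auto simp: affine_perm_data_def)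
  ultimately show ?thesis
    using zc(1) x affine_perm_epair[OF data x(4,5)] by (simp add: aff_roots_iff)
qed

lemma sum_simple_roots_telescope:
  assumes "1 \<le> a" "a \<le> b" "b \<le> n"
  shows "(\<lambda>t. \<Sum>k\<in>{a..<b}. simple_root n k t) = vsub (ev a) (ev b)"
  using assms
proof (induction b)
  case (Suc b)
  show ?case
  proof (cases "a = Suc b")
    case False
    then have "(\<lambda>t. \<Sum>k\<in>{a..<b}. simple_root n k t) = vsub (ev a) (ev b)" "b < n" "a \<le> b"
      using Suc by auto
    then show ?thesis
      by (auto simp: fun_eq_iff simple_root_def vsub_def ev_def)
  qed (auto simp: fun_eq_iff vsub_def)
qed simp

lemma theta_C_eq:
  assumes "1 \<le> n"
  shows "theta_C n = epair 1 1 1 1"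
proof
  fix t
  have "theta_C n t = 2 * (\<Sum>i\<in>{1..<n}. simple_root n i t) + simple_root n n t"
    by (simp add: theta_C_def sum_distrib_left)
  then show "theta_C n t = epair 1 1 1 1 t"
    using fun_cong[OF sum_simple_roots_telescope[of 1 n n], of t] assms
    by (simp add: simple_root_def vsub_def vscale_def ev_def epair_apply)
qed

lemma alpha_1n_eq:
  assumes "1 \<le> n"
  shows "alpha_1n n = epair 1 1 1 n"
proof
  fix t
  have "alpha_1n n t = (\<Sum>i\<in>{1..<n}. simple_root n i t) + simple_root n n t"
    using assms by (simp add: alpha_1n_def atLeastLessThanSuc_atLeastAtMost[symmetric])
  then show "alpha_1n n t = epair 1 1 1 n t"
    using fun_cong[OF sum_simple_roots_telescope[of 1 n n], of t] assms
    by (simp add: simple_root_def vsub_def vscale_def ev_def epair_apply)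
qed

lemma simple_root_eq:
  "k < n \<Longrightarrow> simple_root n k = epair 1 k (-1) (Suc k)"
  "simple_root n n = epair 1 n 1 n"
  by (auto simp: fun_eq_iff simple_root_def vsub_def vscale_def ev_def epair_apply)

lemma areflect_epair_root:
  assumes "k \<in> {1..n}" "l \<in> {1..n}"
  shows "areflect n (epair a k b l, d) (y, c) =
    (let q = 2 * (a * y k + b * y l) / inner_C n (epair a k b l) (epair a k b l)
     in (vsub y (vscale q (epair a k b l)), c - q * d))"
  using assms by (simp add: areflect_def aform_def inner_C_epair)

lemma areflect_simple_root_less:
  assumes "1 \<le> k" "k < n"
  shows "areflect n (simple_root n k, 0) (y, c) = (y \<circ> Transposition.transpose k (Suc k), c)"
proof -
  have "inner_C n (epair 1 k (-1) (Suc k)) (epair 1 k (-1) (Suc k)) = 2"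
    using assms by (simp add: inner_C_epair epair_apply)
  then show ?thesis
    using assms by (auto simp: simple_root_eq areflect_epair_root fun_eq_iff vsub_def vscale_def
        epair_apply transpose_def field_simps)
qed

lemma areflect_simple_root_long:
  assumes "1 \<le> n"
  shows "areflect n (simple_root n n, 0) (y, c) = (y(n := - y n), c)"
proof -
  have "inner_C n (epair 1 n 1 n) (epair 1 n 1 n) = 4"
    using assms by (simp add: inner_C_epair epair_apply)
  then show ?thesis
    using assms by (auto simp: simple_root_eq areflect_epair_root fun_eq_iff vsub_def vscale_def
        epair_apply)
qed

lemma areflect_affine_simple_root:
  assumes "1 \<le> n"
  shows "areflect n (vneg (theta_C n), 1) (y, c) = (y(1 := - y 1), c + y 1)"
proof -
  have "inner_C n (epair (-1) 1 (-1) 1) (epair (-1) 1 (-1) 1) = 4"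
    using assms by (simp add: inner_C_epair epair_apply)
  then show ?thesis
    using assms by (auto simp: theta_C_eq vneg_epair areflect_epair_root fun_eq_iff vsub_def
        vscale_def epair_apply)
qed

lemma aff_simple_roots_cases:
  assumes "\<gamma> \<in> aff_simple_roots n"
  obtains (less) k where "1 \<le> k" "k < n" "\<gamma> = (simple_root n k, 0)"
    | (long) "\<gamma> = (simple_root n n, 0)"
    | (affine) "\<gamma> = (vneg (theta_C n), 1)"
  using assms unfolding aff_simple_roots_def by (auto simp: not_less) (metis le_antisym not_less)

lemma signed_perm_transpose:
  assumes "a \<in> {1..n}" "b \<in> {1..n}"
  shows "signed_perm n (Transposition.transpose a b \<circ> \<rho>) s x
    = signed_perm n \<rho> s x \<circ> Transposition.transpose a b"
proof
  fix t
  have "Transposition.transpose a b t \<in> {1..n} \<longleftrightarrow> t \<in> {1..n}"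
    using assms by (auto simp: transpose_def)
  moreover have "(\<Sum>i\<in>{1..n}. if Transposition.transpose a b (\<rho> i) = t then s i * x i else 0)
    = (\<Sum>i\<in>{1..n}. if \<rho> i = Transposition.transpose a b t then s i * x i else 0)"
    by (rule sum.cong) (metis transpose_involutory)+
  moreover have "Transposition.transpose a b t = t" if "t \<notin> {1..n}"
    using assms that by (auto simp: transpose_def)
  ultimately show "signed_perm n (Transposition.transpose a b \<circ> \<rho>) s x t
    = (signed_perm n \<rho> s x \<circ> Transposition.transpose a b) t"
    by (simp add: signed_perm_def)
qed

lemma areflect_simple_root_less_affine_perm:
  assumes "1 \<le> k" "k < n"
  shows "areflect n (simple_root n k, 0) (affine_perm n \<rho> s m z)
    = affine_perm n (Transposition.transpose k (Suc k) \<circ> \<rho>) s m z"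
  using assms by (simp add: affine_perm_def areflect_simple_root_less signed_perm_transpose)

lemma areflect_simple_root_long_affine_perm:
  assumes "1 \<le> n"
  shows "areflect n (simple_root n n, 0) (affine_perm n \<rho> s m z)
    = affine_perm n \<rho> (\<lambda>i. if \<rho> i = n then - s i else s i) m z"
proof -
  have "(signed_perm n \<rho> s x)(n := - signed_perm n \<rho> s x n)
    = signed_perm n \<rho> (\<lambda>i. if \<rho> i = n then - s i else s i) x" for x
    using assms by (auto simp: fun_eq_iff signed_perm_def sum_negf[symmetric] intro!: sum.cong)
  then show ?thesis
    using assms by (simp add: affine_perm_def areflect_simple_root_long)
qed

lemma areflect_affine_simple_root_affine_perm:
  assumes "1 \<le> n"
  shows "areflect n (vneg (theta_C n), 1) (affine_perm n \<rho> s m z)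
    = affine_perm n \<rho> (\<lambda>i. if \<rho> i = 1 then - s i else s i)
        (\<lambda>i. m i + (if \<rho> i = 1 then s i else 0)) z"
proof -
  have "(signed_perm n \<rho> s x)(1 := - signed_perm n \<rho> s x 1)
    = signed_perm n \<rho> (\<lambda>i. if \<rho> i = 1 then - s i else s i) x" for x
    using assms by (auto simp: fun_eq_iff signed_perm_def sum_negf[symmetric] intro!: sum.cong)
  moreover have "inner_C n m x + signed_perm n \<rho> s x 1
    = inner_C n (\<lambda>i. m i + (if \<rho> i = 1 then s i else 0)) x" for x
    using assms by (auto simp: signed_perm_def inner_C_def algebra_simps sum.distrib
        intro!: sum.cong)
  ultimately show ?thesis
    using assms by (simp add: affine_perm_def areflect_affine_simple_root algebra_simps)
qed

lemma areflect_comp_affine_perm: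
  assumes "\<gamma> \<in> aff_simple_roots n" "1 \<le> n" "affine_perm_data n \<rho> s m"
  obtains \<rho>' s' m' where "affine_perm_data n \<rho>' s' m'"
    "areflect n \<gamma> \<circ> affine_perm n \<rho> s m = affine_perm n \<rho>' s' m'"
  using assms(1)
proof (cases rule: aff_simple_roots_cases)
  case (less k)
  then show ?thesis
    using that[of "Transposition.transpose k (Suc k) \<circ> \<rho>" s m] assms(3)
      bij_betw_trans[of \<rho> "{1..n}" "{1..n}" "Transposition.transpose k (Suc k)" "{1..n}"]
    by (auto simp: fun_eq_iff affine_perm_data_def areflect_simple_root_less_affine_perm)
next
  case long
  have "affine_perm_data n \<rho> (\<lambda>i. if \<rho> i = n then - s i else s i) m"
    using assms(3) by (auto simp: affine_perm_data_def)
  then show ?thesis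
    using that long assms(2) by (simp add: fun_eq_iff areflect_simple_root_long_affine_perm)
next
  case affine
  have "affine_perm_data n \<rho> (\<lambda>i. if \<rho> i = 1 then - s i else s i)
    (\<lambda>i. m i + (if \<rho> i = 1 then s i else 0))"
    using assms(3) by (auto simp: affine_perm_data_def; metis Ints_1 Ints_add Ints_minus)
  then show ?thesis
    using that affine assms(2) by (simp add: fun_eq_iff areflect_affine_simple_root_affine_perm)
qed

lemma aff_weyl_affine_perm:
  assumes "w \<in> aff_weyl n" "1 \<le> n"
  obtains \<rho> s m where "affine_perm_data n \<rho> s m" "w = affine_perm n \<rho> s m"
proof -
  from assms(1) have "\<exists>\<rho> s m. affine_perm_data n \<rho> s m \<and> w = affine_perm n \<rho> s m"
  proof induction
    case id_in
    have "affine_perm_data n id (\<lambda>_. 1) (\<lambda>_. 0)" by (simp add: affine_perm_data_def)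
    then show ?case using affine_perm_id by metis
  next
    case (refl_comp w \<gamma>)
    then show ?case using areflect_comp_affine_perm[OF refl_comp.hyps(2) assms(2)] by metis
  qed
  then show ?thesis using that by blast
qed

lemma areflect_areflect:
  assumes "\<gamma> \<in> aff_simple_roots n" "1 \<le> n"
  shows "areflect n \<gamma> (areflect n \<gamma> z) = z"
proof -
  obtain y c where z: "z = (y, c)" by fastforce
  from assms(1) show ?thesis
    by (cases rule: aff_simple_roots_cases)
      (use z assms(2) in \<open>simp_all add: areflect_simple_root_less areflect_simple_root_long
         areflect_affine_simple_root comp_assoc\<close>)
qed

lemma bij_areflect: "\<gamma> \<in> aff_simple_roots n \<Longrightarrow> 1 \<le> n \<Longrightarrow> bij (areflect n \<gamma>)"
  by (rule o_bij[where g = "areflect n \<gamma>"]) (auto simp: fun_eq_iff areflect_areflect)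

lemma inv_areflect: "\<gamma> \<in> aff_simple_roots n \<Longrightarrow> 1 \<le> n \<Longrightarrow> inv (areflect n \<gamma>) = areflect n \<gamma>"
  by (rule inv_equality) (auto simp: areflect_areflect)

lemma aff_weyl_bij: "w \<in> aff_weyl n \<Longrightarrow> 1 \<le> n \<Longrightarrow> bij w"
proof (induction rule: aff_weyl.induct)
  case (refl_comp w \<gamma>)
  then show ?case using bij_areflect by (blast intro: bij_comp)
qed simp

lemma aff_weyl_inv_comp:
  assumes "w0 \<in> aff_weyl n" "1 \<le> n" "w \<in> aff_weyl n"
  shows "inv w0 \<circ> w \<in> aff_weyl n"
  using assms(1,3)
proof (induction arbitrary: w)
  case (refl_comp w0 \<gamma>)
  have "inv (areflect n \<gamma> \<circ> w0) = inv w0 \<circ> areflect n \<gamma>"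
    using o_inv_distrib[OF bij_areflect aff_weyl_bij] refl_comp.hyps assms(2)
    by (simp add: inv_areflect)
  then show ?case
    using refl_comp.IH[OF aff_weyl.refl_comp[OF refl_comp.prems refl_comp.hyps(2)]]
    by (simp only: comp_assoc)
qed simp

lemma aff_weyl_inv: "w \<in> aff_weyl n \<Longrightarrow> 1 \<le> n \<Longrightarrow> inv w \<in> aff_weyl n"
  using aff_weyl_inv_comp[OF _ _ aff_weyl.id_in] by simp

lemma aff_weyl_aneg: "w \<in> aff_weyl n \<Longrightarrow> 1 \<le> n \<Longrightarrow> w (aneg z) = aneg (w z)"
  by (metis aff_weyl_affine_perm affine_perm_aneg)

lemma aff_weyl_aff_roots: "w \<in> aff_weyl n \<Longrightarrow> 1 \<le> n \<Longrightarrow> z \<in> aff_roots n \<Longrightarrow> w z \<in> aff_roots n"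
  by (metis aff_weyl_affine_perm affine_perm_aff_roots)

section \<open>Elements of the affine Weyl group are determined by their inversion sets\<close>

lemma increasing_self_map_eq_id:
  fixes \<rho> :: "nat \<Rightarrow> nat"
  assumes into: "\<And>i. i \<in> {1..n} \<Longrightarrow> \<rho> i \<in> {1..n}"
    and incr: "\<And>i. 1 \<le> i \<Longrightarrow> i < n \<Longrightarrow> \<rho> i < \<rho> (Suc i)"
    and i: "i \<in> {1..n}"
  shows "\<rho> i = i"
proof -
  have spread: "\<rho> i + (j - i) \<le> \<rho> j" if "1 \<le> i" "i \<le> j" "j \<le> n" for i j
    using that(2,3)
  proof (induction j rule: dec_induct)
    case (step j)
    then show ?case using incr[of j] that(1) by simp
  qed simp
  have "\<rho> 1 + (i - 1) \<le> \<rho> i" "\<rho> i + (n - i) \<le> \<rho> n"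
    using i spread[of 1 i] spread[of i n] by auto
  moreover have "1 \<le> \<rho> 1" "\<rho> n \<le> n"
    using into[of 1] into[of n] i by auto
  ultimately show ?thesis using i by auto
qed

lemma epair_in_aff_pos_roots:
  "a = 1 \<or> a = -1 \<Longrightarrow> b = 1 \<or> b = -1 \<Longrightarrow> k \<in> {1..n} \<Longrightarrow> l \<in> {1..n} \<Longrightarrow> (k = l \<longrightarrow> a = b)
   \<Longrightarrow> 0 < a * weight n k + b * weight n l \<Longrightarrow> (epair a k b l, 0) \<in> aff_pos_roots n"
  by (simp add: aff_pos_roots_iff epair_in_roots_C height_epair)

lemma affine_perm_preserving_pos_coeffs:
  assumes data: "affine_perm_data n \<rho> s m"
    and pres: "affine_perm n \<rho> s m ` aff_pos_roots n \<subseteq> aff_pos_roots n"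
    and i: "i \<in> {1..n}"
  shows "m i = 0" "s i = 1"
proof -
  have \<rho>i: "\<rho> i \<in> {1..n}" and si: "s i = 1 \<or> s i = -1" and mi: "m i \<in> \<int>"
    using data i by (auto simp: affine_perm_data_def bij_betw_def)
  have "(epair 1 i 1 i, 0) \<in> aff_pos_roots n"
    using i weight_pos[OF i] by (intro epair_in_aff_pos_roots) auto
  then have up: "(epair (s i) (\<rho> i) (s i) (\<rho> i), m i + m i) \<in> aff_pos_roots n"
    using pres affine_perm_epair[OF data i i, of 1 1 0] by auto
  have "(epair (-1) i (-1) i, 1) \<in> aff_pos_roots n"
    using i by (simp add: aff_pos_roots_iff epair_in_roots_C)
  then have "(epair (- s i) (\<rho> i) (- s i) (\<rho> i), 1 - m i - m i) \<in> aff_pos_roots n"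
    using pres affine_perm_epair[OF data i i, of "-1" "-1" 1] by auto
  then have "0 \<le> m i + m i" "0 \<le> 1 - m i - m i"
    using up by (auto simp: aff_pos_roots_iff)
  with mi show m0: "m i = 0" by (auto elim!: Ints_cases)
  have "0 < s i * weight n (\<rho> i) + s i * weight n (\<rho> i)"
    using up \<rho>i by (auto simp: aff_pos_roots_iff m0 height_epair)
  then show "s i = 1" using si weight_pos[OF \<rho>i] by auto
qed

lemma affine_perm_preserving_pos_eq_id:
  assumes data: "affine_perm_data n \<rho> s m"
    and pres: "affine_perm n \<rho> s m ` aff_pos_roots n \<subseteq> aff_pos_roots n"
  shows "affine_perm n \<rho> s m = id"
proof -
  note trivial = affine_perm_preserving_pos_coeffs[OF data pres]
  have into: "\<And>i. i \<in> {1..n} \<Longrightarrow> \<rho> i \<in> {1..n}"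
    using data by (auto simp: affine_perm_data_def bij_betw_def)
  have incr: "\<rho> i < \<rho> (Suc i)" if "1 \<le> i" "i < n" for i
  proof -
    have i: "i \<in> {1..n}" "Suc i \<in> {1..n}" using that by auto
    have "(epair 1 i (-1) (Suc i), 0) \<in> aff_pos_roots n"
      using i by (intro epair_in_aff_pos_roots) (auto simp: weight_def)
    then have "(epair 1 (\<rho> i) (-1) (\<rho> (Suc i)), 0) \<in> aff_pos_roots n"
      using pres affine_perm_epair[OF data i, of 1 "-1" 0] by (auto simp: trivial[OF i(1)]
          trivial[OF i(2)])
    then show ?thesis using into[OF i(1)] into[OF i(2)]
      by (auto simp: aff_pos_roots_iff height_epair weight_def)
  qed
  have "\<rho> i = i" if "i \<in> {1..n}" for i
    using increasing_self_map_eq_id[of n \<rho>, OF into incr that] .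
  then have "affine_perm n \<rho> s m = affine_perm n id (\<lambda>_. 1) (\<lambda>_. 0)"
    by (intro affine_perm_cong) (simp add: trivial)
  then show ?thesis by (simp add: affine_perm_id)
qed

lemma inv_comp_preserves_aff_pos_roots:
  assumes n: "1 \<le> n" and w: "w \<in> aff_weyl n" and w0: "w0 \<in> aff_weyl n"
    and eq: "inv_set n w = inv_set n w0"
  shows "(inv w0 \<circ> w) ` aff_pos_roots n \<subseteq> aff_pos_roots n"
proof (rule image_subsetI)
  let ?P = "aff_pos_roots n"
  fix \<gamma> assume \<gamma>: "\<gamma> \<in> ?P"
  define \<beta> where "\<beta> = w \<gamma>"
  have \<gamma>R: "\<gamma> \<in> aff_roots n" using \<gamma> aff_pos_roots_subset by blast
  then have \<beta>R: "\<beta> \<in> aff_roots n" by (simp add: \<beta>_def aff_weyl_aff_roots[OF w n])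
  have inv_\<beta>: "inv w \<beta> = \<gamma>" using aff_weyl_bij[OF w n] by (simp add: \<beta>_def bij_is_inj)
  have "aneg \<gamma> \<notin> ?P" using aff_pos_roots_iff_aneg[OF \<gamma>R] \<gamma> by simp
  have "inv w0 \<beta> \<in> ?P"
  proof (cases "\<beta> \<in> ?P")
    case True
    show ?thesis
    proof (rule ccontr)
      assume "inv w0 \<beta> \<notin> ?P"
      moreover have "inv w0 \<beta> \<in> aff_roots n"
        using aff_weyl_aff_roots[OF aff_weyl_inv[OF w0 n] n \<beta>R] .
      ultimately have "aneg (inv w0 \<beta>) \<in> ?P" using aff_pos_roots_iff_aneg by blast
      then have "\<beta> \<in> inv_set n w0" using True by (simp add: inv_set_def aneg_image_iff)
      then have "\<beta> \<in> inv_set n w" using eq by simp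
      then show False using inv_\<beta> \<open>aneg \<gamma> \<notin> ?P\<close> by (simp add: inv_set_def aneg_image_iff)
    qed
  next
    case False
    then have "aneg \<beta> \<in> ?P" using aff_pos_roots_iff_aneg[OF \<beta>R] by simp
    moreover have "inv w (aneg \<beta>) = aneg \<gamma>"
      using aff_weyl_aneg[OF aff_weyl_inv[OF w n] n] inv_\<beta> by simp
    ultimately have "aneg \<beta> \<in> inv_set n w" using \<gamma> by (simp add: inv_set_def aneg_image_iff)
    then have "aneg \<beta> \<in> inv_set n w0" using eq by simp
    then show ?thesis using aff_weyl_aneg[OF aff_weyl_inv[OF w0 n] n]
      by (simp add: inv_set_def aneg_image_iff)
  qed
  then show "(inv w0 \<circ> w) \<gamma> \<in> ?P" by (simp add: \<beta>_def)
qed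

lemma aff_weyl_inv_set_inj:
  assumes n: "1 \<le> n" and w: "w \<in> aff_weyl n" and w0: "w0 \<in> aff_weyl n"
    and eq: "inv_set n w = inv_set n w0"
  shows "w = w0"
proof -
  obtain \<rho> s m where data: "affine_perm_data n \<rho> s m" and u: "inv w0 \<circ> w = affine_perm n \<rho> s m"
    using aff_weyl_affine_perm[OF aff_weyl_inv_comp[OF w0 n w] n] .
  have "inv w0 \<circ> w = id"
    using affine_perm_preserving_pos_eq_id[OF data] inv_comp_preserves_aff_pos_roots[OF n w w0 eq]
    by (simp add: u)
  moreover have "w = w0 \<circ> (inv w0 \<circ> w)"
    using aff_weyl_bij[OF w0 n] by (simp add: fun_eq_iff bij_is_surj surj_f_inv_f)
  ultimately show ?thesis by simp
qed

section \<open>Shuffle permutations\<close>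

definition shuffle_perm :: "nat \<Rightarrow> nat \<Rightarrow> (nat \<Rightarrow> nat) \<Rightarrow> bool" where
  "shuffle_perm n p \<rho> \<longleftrightarrow> p \<le> n \<and> bij_betw \<rho> {1..n} {1..n}
     \<and> (\<forall>i j. 1 \<le> i \<and> i < j \<and> j \<le> p \<longrightarrow> \<rho> j < \<rho> i)
     \<and> (\<forall>i j. p < i \<and> i < j \<and> j \<le> n \<longrightarrow> \<rho> i < \<rho> j)"

definition shuffle_pair :: "nat \<Rightarrow> nat \<Rightarrow> (nat \<Rightarrow> nat) \<Rightarrow> nat \<Rightarrow> nat \<Rightarrow> bool" where
  "shuffle_pair n p \<rho> i j \<longleftrightarrow>
     (1 \<le> i \<and> i \<le> j \<and> j \<le> p) \<or> (1 \<le> i \<and> i \<le> p \<and> p < j \<and> j \<le> n \<and> \<rho> j < \<rho> i)"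

definition shuffle_ideal :: "nat \<Rightarrow> nat \<Rightarrow> (nat \<Rightarrow> nat) \<Rightarrow> vec set" where
  "shuffle_ideal n p \<rho> = {epair 1 i 1 j | i j. shuffle_pair n p \<rho> i j}"

definition neg_upto :: "nat \<Rightarrow> nat \<Rightarrow> real" where
  "neg_upto p i = (if i \<le> p then -1 else 1)"

definition ind_upto :: "nat \<Rightarrow> nat \<Rightarrow> real" where
  "ind_upto p i = (if i \<le> p then 1 else 0)"

definition shuffle_elt :: "nat \<Rightarrow> nat \<Rightarrow> (nat \<Rightarrow> nat) \<Rightarrow> avec \<Rightarrow> avec" where
  "shuffle_elt n p \<rho> = affine_perm n \<rho> (neg_upto p) (ind_upto p)"

lemma shuffle_permD:
  assumes "shuffle_perm n p \<rho>"
  shows "p \<le> n" "bij_betw \<rho> {1..n} {1..n}" "inj_on \<rho> {1..n}"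
    "\<And>i. i \<in> {1..n} \<Longrightarrow> \<rho> i \<in> {1..n}"
    "\<And>i j. 1 \<le> i \<Longrightarrow> i < j \<Longrightarrow> j \<le> p \<Longrightarrow> \<rho> j < \<rho> i"
    "\<And>i j. p < i \<Longrightarrow> i < j \<Longrightarrow> j \<le> n \<Longrightarrow> \<rho> i < \<rho> j"
  using assms by (auto simp: shuffle_perm_def bij_betw_def)

lemma shuffle_perm_affine_perm_data:
  "shuffle_perm n p \<rho> \<Longrightarrow> affine_perm_data n \<rho> (neg_upto p) (ind_upto p)"
  by (auto simp: shuffle_perm_def affine_perm_data_def neg_upto_def ind_upto_def)

lemma shuffle_elt_epair:
  "shuffle_perm n p \<rho> \<Longrightarrow> k \<in> {1..n} \<Longrightarrow> l \<in> {1..n} \<Longrightarrow> shuffle_elt n p \<rho> (epair a k b l, c)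
    = (epair (neg_upto p k * a) (\<rho> k) (neg_upto p l * b) (\<rho> l),
       c + a * ind_upto p k + b * ind_upto p l)"
  unfolding shuffle_elt_def by (rule affine_perm_epair[OF shuffle_perm_affine_perm_data])

lemma Ints_nonneg_cases: "(c :: real) \<in> \<int> \<Longrightarrow> 0 \<le> c \<Longrightarrow> c = 0 \<or> 1 \<le> c"
  by (auto elim!: Ints_cases)

lemma shuffle_elt_not_inverts_epair_one:
  assumes v: "shuffle_perm n p \<rho>" and b: "b = 1 \<or> b = -1" and k: "k \<in> {1..n}" and l: "l \<in> {1..n}"
    and kl: "k = l \<longrightarrow> b = 1" and pos: "(epair 1 k b l, c) \<in> aff_pos_roots n"
  shows "aneg (shuffle_elt n p \<rho> (epair 1 k b l, c)) \<notin> aff_pos_roots n"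
proof
  note \<rho> = shuffle_permD[OF v]
  assume neg: "aneg (shuffle_elt n p \<rho> (epair 1 k b l, c)) \<in> aff_pos_roots n"
  have c: "c \<in> \<int>" "0 < c \<or> (c = 0 \<and> 0 < weight n k + b * weight n l)"
    using pos k l by (auto simp: aff_pos_roots_iff height_epair)
  then have "c = 0 \<or> 1 \<le> c" using Ints_nonneg_cases[of c] by linarith
  moreover have "c + ind_upto p k + b * ind_upto p l < 0 \<or> (c + ind_upto p k + b * ind_upto p l = 0
     \<and> 0 < - (neg_upto p k * weight n (\<rho> k)) - neg_upto p l * b * weight n (\<rho> l))"
    using neg \<rho>(4)[OF k] \<rho>(4)[OF l]
    by (simp add: shuffle_elt_epair[OF v k l] aneg_def vneg_epair aff_pos_roots_iff height_epair)
      linarith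
  moreover have "k < l \<Longrightarrow> l \<le> p \<Longrightarrow> \<rho> l < \<rho> k" "p < k \<Longrightarrow> k < l \<Longrightarrow> \<rho> k < \<rho> l"
    using k l \<rho>(5,6) by auto
  ultimately show False
    using b c(2) kl weight_pos[OF \<rho>(4)[OF k]] weight_pos[OF \<rho>(4)[OF l]]
    by (auto simp: neg_upto_def ind_upto_def weight_def split: if_splits)
qed

lemma shuffle_elt_inverts_epair_neg_one:
  assumes v: "shuffle_perm n p \<rho>" and k: "k \<in> {1..n}" and l: "l \<in> {1..n}" and "k \<le> l"
    and pos: "(epair (-1) k (-1) l, c) \<in> aff_pos_roots n"
    and neg: "aneg (shuffle_elt n p \<rho> (epair (-1) k (-1) l, c)) \<in> aff_pos_roots n"
  shows "c = 1 \<and> shuffle_pair n p \<rho> k l"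
proof -
  note \<rho> = shuffle_permD[OF v]
  have "c \<in> \<int>" "0 < c"
    using pos k l weight_pos[OF k] weight_pos[OF l] by (auto simp: aff_pos_roots_iff height_epair)
  then have "c = 1 \<or> 2 \<le> c"
    using Ints_nonneg_cases[of c] Ints_nonneg_cases[of "c - 1"] by force
  moreover have "c - ind_upto p k - ind_upto p l < 0 \<or> (c - ind_upto p k - ind_upto p l = 0
     \<and> 0 < neg_upto p k * weight n (\<rho> k) + neg_upto p l * weight n (\<rho> l))"
    using neg \<rho>(4)[OF k] \<rho>(4)[OF l]
    by (simp add: shuffle_elt_epair[OF v k l] aneg_def vneg_epair aff_pos_roots_iff height_epair)
      linarith
  moreover have "k < l \<Longrightarrow> l \<le> p \<Longrightarrow> \<rho> l < \<rho> k" "p < k \<Longrightarrow> k < l \<Longrightarrow> \<rho> k < \<rho> l"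
    using k l \<rho>(5,6) by auto
  ultimately show ?thesis
    using k l \<open>k \<le> l\<close> weight_pos[OF \<rho>(4)[OF k]] weight_pos[OF \<rho>(4)[OF l]]
    by (auto simp: shuffle_pair_def neg_upto_def ind_upto_def weight_def split: if_splits)
qed

lemma shuffle_elt_inverted_root:
  assumes v: "shuffle_perm n p \<rho>" and pos: "(x, c) \<in> aff_pos_roots n"
    and neg: "aneg (shuffle_elt n p \<rho> (x, c)) \<in> aff_pos_roots n"
  obtains i j where "shuffle_pair n p \<rho> i j" "x = vneg (epair 1 i 1 j)" "c = 1"
proof -
  obtain a k b l where x: "x = epair a k b l" "a = 1 \<or> a = -1" "b = 1 \<or> b = -1"
    and kl: "k \<in> {1..n}" "l \<in> {1..n}" "k = l \<longrightarrow> a = b"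
    using pos by (auto simp: aff_pos_roots_iff elim: roots_CE)
  have "a \<noteq> 1"
    using shuffle_elt_not_inverts_epair_one[OF v x(3) kl(1,2)] x(1) kl(3) pos neg by auto
  moreover have "b \<noteq> 1"
    using shuffle_elt_not_inverts_epair_one[OF v x(2) kl(2,1)] x(1) kl(3) pos neg
    by (auto simp: epair_swap[of a k])
  ultimately have x': "x = epair (-1) k (-1) l" "x = epair (-1) l (-1) k"
    using x epair_swap by auto
  show ?thesis
  proof (cases "k \<le> l")
    case True
    then show ?thesis
      using shuffle_elt_inverts_epair_neg_one[OF v kl(1,2) True] pos neg that x'(1)
      by (auto simp: vneg_epair)
  next
    case False
    then show ?thesis
      using shuffle_elt_inverts_epair_neg_one[OF v kl(2,1)] pos neg that x'(2)
      by (auto simp: vneg_epair)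
  qed
qed

lemma shuffle_elt_inverts_pair:
  assumes v: "shuffle_perm n p \<rho>" and ij: "shuffle_pair n p \<rho> i j"
  shows "(epair (-1) i (-1) j, 1) \<in> aff_pos_roots n"
    "aneg (shuffle_elt n p \<rho> (epair (-1) i (-1) j, 1)) \<in> aff_pos_roots n"
proof -
  note \<rho> = shuffle_permD[OF v]
  have i: "i \<in> {1..n}" and j: "j \<in> {1..n}"
    using ij \<rho>(1) by (auto simp: shuffle_pair_def)
  show "(epair (-1) i (-1) j, 1) \<in> aff_pos_roots n"
    using i j by (simp add: aff_pos_roots_iff epair_in_roots_C)
  have "\<rho> i = \<rho> j \<longrightarrow> i = j" using \<rho>(3) i j by (auto dest: inj_onD)
  then have "epair (neg_upto p i) (\<rho> i) (neg_upto p j) (\<rho> j) \<in> roots_C n"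
    using \<rho>(4)[OF i] \<rho>(4)[OF j] by (intro epair_in_roots_C) (auto simp: neg_upto_def)
  moreover have "ind_upto p i + ind_upto p j - 1 > 0 \<or> (ind_upto p i + ind_upto p j - 1 = 0
    \<and> 0 < height n (epair (neg_upto p i) (\<rho> i) (neg_upto p j) (\<rho> j)))"
    using ij \<rho>(4)[OF i] \<rho>(4)[OF j]
    by (auto simp: shuffle_pair_def ind_upto_def neg_upto_def height_epair weight_def)
  ultimately show "aneg (shuffle_elt n p \<rho> (epair (-1) i (-1) j, 1)) \<in> aff_pos_roots n"
    by (simp add: shuffle_elt_epair[OF v i j] aneg_def vneg_epair aff_pos_roots_iff ind_upto_def)
      (auto split: if_splits)
qed

lemma shuffle_elt_inverted_roots:
  assumes "shuffle_perm n p \<rho>"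
  shows "{\<gamma> \<in> aff_pos_roots n. shuffle_elt n p \<rho> \<gamma> \<in> aneg ` aff_pos_roots n}
    = {(vneg \<beta>, 1) | \<beta>. \<beta> \<in> shuffle_ideal n p \<rho>}"
proof (intro equalityI subsetI)
  fix \<gamma> assume "\<gamma> \<in> {\<gamma> \<in> aff_pos_roots n. shuffle_elt n p \<rho> \<gamma> \<in> aneg ` aff_pos_roots n}"
  moreover obtain x c where "\<gamma> = (x, c)" by fastforce
  ultimately obtain i j where "shuffle_pair n p \<rho> i j" "\<gamma> = (vneg (epair 1 i 1 j), 1)"
    using shuffle_elt_inverted_root[OF assms, of x c] by (auto simp: aneg_image_iff) blast
  then show "\<gamma> \<in> {(vneg \<beta>, 1) | \<beta>. \<beta> \<in> shuffle_ideal n p \<rho>}"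
    unfolding shuffle_ideal_def by blast
next
  fix \<gamma> :: avec assume "\<gamma> \<in> {(vneg \<beta>, 1) | \<beta>. \<beta> \<in> shuffle_ideal n p \<rho>}"
  then obtain i j where "shuffle_pair n p \<rho> i j" "\<gamma> = (epair (-1) i (-1) j, 1)"
    unfolding shuffle_ideal_def by (auto simp: vneg_epair)
  then show "\<gamma> \<in> {\<gamma> \<in> aff_pos_roots n. shuffle_elt n p \<rho> \<gamma> \<in> aneg ` aff_pos_roots n}"
    using shuffle_elt_inverts_pair[OF assms] by (simp add: aneg_image_iff)
qed

lemma transpose_Suc_less_iff:
  fixes u w k :: nat
  assumes "u \<noteq> w" "\<not> (u \<in> {k, Suc k} \<and> w \<in> {k, Suc k})"
  shows "Transposition.transpose k (Suc k) u < Transposition.transpose k (Suc k) w \<longleftrightarrow> u < w"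
  using assms by (auto simp: transpose_def)

lemma shuffle_perm_values_adjacent:
  assumes v: "shuffle_perm n p \<rho>" and "i0 \<in> {1..n}" "j0 \<in> {1..n}" "{\<rho> i0, \<rho> j0} = {k, Suc k}"
    and x: "x \<in> {1..n}"
  shows "\<rho> x \<in> {k, Suc k} \<longleftrightarrow> x = i0 \<or> x = j0"
proof -
  have "\<rho> x = \<rho> y \<longleftrightarrow> x = y" if "y \<in> {1..n}" for y
    using shuffle_permD(3)[OF v] x that by (auto dest: inj_onD)
  then show ?thesis using assms(2,3,4) by blast
qed

lemma shuffle_perm_transpose:
  assumes v: "shuffle_perm n p \<rho>" and i0: "1 \<le> i0" "i0 \<le> p" and j0: "p < j0" "j0 \<le> n"
    and adj: "{\<rho> i0, \<rho> j0} = {k, Suc k}"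
  shows "shuffle_perm n p (Transposition.transpose k (Suc k) \<circ> \<rho>)"
proof -
  note \<rho> = shuffle_permD[OF v]
  have ij0: "i0 \<in> {1..n}" "j0 \<in> {1..n}" using i0 j0 \<rho>(1) by auto
  note adjacent = shuffle_perm_values_adjacent[OF v ij0 adj]
  have "{k, Suc k} \<subseteq> {1..n}" unfolding adj[symmetric] using \<rho>(4) ij0 by blast
  then have "bij_betw (Transposition.transpose k (Suc k) \<circ> \<rho>) {1..n} {1..n}"
    using \<rho>(2) by (auto intro: bij_betw_trans)
  moreover have "\<rho> j \<noteq> \<rho> i" if "i \<in> {1..n}" "j \<in> {1..n}" "i \<noteq> j" for i j
    using \<rho>(3) that by (auto dest: inj_onD)
  ultimately show ?thesis
    unfolding shuffle_perm_def
    using \<rho>(1,5,6) adjacent i0 j0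
    by (auto simp: transpose_Suc_less_iff)
qed

lemma shuffle_pair_transpose:
  assumes v: "shuffle_perm n p \<rho>" and i0: "1 \<le> i0" "i0 \<le> p" and j0: "p < j0" "j0 \<le> n"
    and k: "\<rho> i0 = k" "\<rho> j0 = Suc k"
  shows "shuffle_pair n p (Transposition.transpose k (Suc k) \<circ> \<rho>) i j
    \<longleftrightarrow> shuffle_pair n p \<rho> i j \<or> (i = i0 \<and> j = j0)"
proof -
  note \<rho> = shuffle_permD[OF v]
  have ij0: "i0 \<in> {1..n}" "j0 \<in> {1..n}" using i0 j0 \<rho>(1) by auto
  have adj: "{\<rho> i0, \<rho> j0} = {k, Suc k}" using k by auto
  have "Transposition.transpose k (Suc k) (\<rho> j) < Transposition.transpose k (Suc k) (\<rho> i)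
      \<longleftrightarrow> \<rho> j < \<rho> i"
    if "1 \<le> i" "i \<le> p" "p < j" "j \<le> n" "\<not> (i = i0 \<and> j = j0)" for i j
  proof (rule transpose_Suc_less_iff)
    show "\<rho> j \<noteq> \<rho> i" using \<rho>(1,3) that by (auto dest: inj_onD)
    show "\<not> (\<rho> j \<in> {k, Suc k} \<and> \<rho> i \<in> {k, Suc k})"
      using shuffle_perm_values_adjacent[OF v ij0 adj] \<rho>(1) that i0 j0 by auto
  qed
  then show ?thesis
    unfolding shuffle_pair_def using i0 j0 k by (cases "i = i0 \<and> j = j0") auto
qed

lemma shuffle_ideal_transpose:
  assumes "shuffle_perm n p \<rho>" "1 \<le> i0" "i0 \<le> p" "p < j0" "j0 \<le> n" "\<rho> i0 = k" "\<rho> j0 = Suc k"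
  shows "shuffle_ideal n p (Transposition.transpose k (Suc k) \<circ> \<rho>)
    = insert (epair 1 i0 1 j0) (shuffle_ideal n p \<rho>)"
  unfolding shuffle_ideal_def shuffle_pair_transpose[OF assms] by blast

lemma shuffle_elt_zero:
  assumes "shuffle_perm n 0 \<rho>"
  shows "shuffle_elt n 0 \<rho> = id"
proof -
  note \<rho> = shuffle_permD[OF assms]
  have "\<rho> i = i" if "i \<in> {1..n}" for i
    using increasing_self_map_eq_id[of n \<rho>, OF \<rho>(4) _ that] \<rho>(6) by simp
  then have "shuffle_elt n 0 \<rho> = affine_perm n id (\<lambda>_. 1) (\<lambda>_. 0)"
    unfolding shuffle_elt_def by (intro affine_perm_cong) (auto simp: neg_upto_def ind_upto_def)
  then show ?thesis by (simp add: affine_perm_id)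
qed

lemma shuffle_elt_transpose:
  assumes "1 \<le> k" "k < n"
  shows "areflect n (simple_root n k, 0) \<circ> shuffle_elt n p (Transposition.transpose k (Suc k) \<circ> \<rho>)
    = shuffle_elt n p \<rho>"
  using assms by (simp add: fun_eq_iff shuffle_elt_def areflect_simple_root_less_affine_perm
      flip: comp_assoc)

lemma shuffle_perm_last_one:
  assumes v: "shuffle_perm n p \<rho>" and p: "1 \<le> p"
    and no_adj: "\<And>i j. 1 \<le> i \<Longrightarrow> i \<le> p \<Longrightarrow> p < j \<Longrightarrow> j \<le> n \<Longrightarrow> \<rho> i \<noteq> Suc (\<rho> j)"
  shows "\<rho> p = 1"
proof (rule ccontr)
  note \<rho> = shuffle_permD[OF v]
  assume "\<rho> p \<noteq> 1"
  moreover have "\<rho> p \<in> {1..n}" using \<rho>(1,4) p by auto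
  ultimately have "\<rho> p - 1 \<in> {1..n}" by auto
  then have "\<rho> p - 1 \<in> \<rho> ` {1..n}" using \<rho>(2) by (simp add: bij_betw_def)
  then obtain j where "j \<in> {1..n}" "\<rho> j = \<rho> p - 1" by (metis imageE)
  then have j: "j \<in> {1..n}" "\<rho> p = Suc (\<rho> j)"
    using \<open>\<rho> p \<noteq> 1\<close> \<open>\<rho> p \<in> {1..n}\<close> by auto
  show False
  proof (cases "j \<le> p")
    case True
    moreover have "j \<noteq> p" using j(2) by auto
    ultimately have "\<rho> p < \<rho> j" using \<rho>(5)[of j p] j(1) by simp
    then show False using j(2) by simp
  next
    case False
    then show False using no_adj[of p j] j p by simp
  qed
qed

lemma shuffle_perm_pred:
  assumes v: "shuffle_perm n p \<rho>" and p: "1 \<le> p" and one: "\<rho> p = 1"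
  shows "shuffle_perm n (p - 1) \<rho>"
proof -
  note \<rho> = shuffle_permD[OF v]
  have "\<rho> p < \<rho> j" if "p < j" "j \<le> n" for j
  proof -
    have "\<rho> j \<noteq> \<rho> p" using \<rho>(1,3) that p by (auto dest: inj_onD)
    then show ?thesis using \<rho>(4)[of j] one that p by auto
  qed
  then have "\<rho> i < \<rho> j" if "p - 1 < i" "i < j" "j \<le> n" for i j
    using \<rho>(6) that by (cases "i = p") auto
  then show ?thesis
    using \<rho>(1,2,5) by (auto simp: shuffle_perm_def)
qed

lemma shuffle_elt_pred:
  assumes v: "shuffle_perm n p \<rho>" and p: "1 \<le> p" and one: "\<rho> p = 1"
  shows "areflect n (vneg (theta_C n), 1) \<circ> shuffle_elt n (p - 1) \<rho> = shuffle_elt n p \<rho>"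
proof -
  note \<rho> = shuffle_permD[OF v]
  have "\<rho> i = 1 \<longleftrightarrow> i = p" if "i \<in> {1..n}" for i
    using inj_onD[OF \<rho>(3), of i p] \<rho>(1) one that p by auto
  then have eq: "affine_perm n \<rho> (\<lambda>i. if \<rho> i = 1 then - neg_upto (p - 1) i else neg_upto (p - 1) i)
      (\<lambda>i. ind_upto (p - 1) i + (if \<rho> i = 1 then neg_upto (p - 1) i else 0))
    = affine_perm n \<rho> (neg_upto p) (ind_upto p)"
    using p by (intro affine_perm_cong) (auto simp: neg_upto_def ind_upto_def)
  have n: "1 \<le> n" using \<rho>(1) p by simp
  show ?thesis
    unfolding shuffle_elt_def
    by (rule ext) (simp only: comp_apply areflect_affine_simple_root_affine_perm[OF n] eq)
qed

lemma shuffle_perm_transpose_sum: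
  assumes v: "shuffle_perm n p \<rho>" and i0: "1 \<le> i0" "i0 \<le> p" and j0: "p < j0" "j0 \<le> n"
    and k: "\<rho> i0 = Suc k" "\<rho> j0 = k"
  shows "sum (Transposition.transpose k (Suc k) \<circ> \<rho>) {1..p} + 1 = sum \<rho> {1..p}"
proof -
  have ij0: "i0 \<in> {1..n}" "j0 \<in> {1..n}" using i0 j0 shuffle_permD(1)[OF v] by auto
  have adj: "{\<rho> i0, \<rho> j0} = {k, Suc k}" using k by auto
  have "(Transposition.transpose k (Suc k) \<circ> \<rho>) i + (if i = i0 then 1 else 0) = \<rho> i"
    if "i \<in> {1..p}" for i
    using shuffle_perm_values_adjacent[OF v ij0 adj, of i] shuffle_permD(1)[OF v] that j0 k
    by (auto simp: transpose_def)
  then have "sum \<rho> {1..p} = (\<Sum>i\<in>{1..p}. (Transposition.transpose k (Suc k) \<circ> \<rho>) i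
    + (if i = i0 then 1 else 0))"
    by (intro sum.cong) auto
  then show ?thesis using i0 by (simp add: sum.distrib)
qed

text \<open>Induction on the sum of \<rho> over {1..p}: if some i \<le> p < j has \<rho> i = \<rho> j + 1, exchanging
  these two values lowers the sum and costs one simple reflection; otherwise \<rho> p = 1, and
  p can be lowered at the cost of the affine simple reflection.\<close>
lemma shuffle_elt_in_aff_weyl:
  assumes "shuffle_perm n p \<rho>"
  shows "shuffle_elt n p \<rho> \<in> aff_weyl n"
  using assms
proof (induction "sum \<rho> {1..p}" arbitrary: p \<rho> rule: less_induct)
  case less
  note \<rho> = shuffle_permD[OF less.prems]
  consider "p = 0"
    | i0 j0 where "1 \<le> i0" "i0 \<le> p" "p < j0" "j0 \<le> n" "\<rho> i0 = Suc (\<rho> j0)"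
    | "1 \<le> p" "\<And>i j. 1 \<le> i \<Longrightarrow> i \<le> p \<Longrightarrow> p < j \<Longrightarrow> j \<le> n \<Longrightarrow> \<rho> i \<noteq> Suc (\<rho> j)"
    by fastforce
  then show ?case
  proof cases
    case 1
    then show ?thesis using shuffle_elt_zero less.prems aff_weyl.id_in by simp
  next
    case (2 i0 j0)
    define k where "k = \<rho> j0"
    have k: "1 \<le> k" "k < n" using \<rho>(4)[of i0] \<rho>(4)[of j0] 2 \<rho>(1) by (auto simp: k_def)
    have "shuffle_perm n p (Transposition.transpose k (Suc k) \<circ> \<rho>)"
      using shuffle_perm_transpose[OF less.prems 2(1-4)] 2(5) by (auto simp: k_def)
    moreover have "sum (Transposition.transpose k (Suc k) \<circ> \<rho>) {1..p} < sum \<rho> {1..p}"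
      using shuffle_perm_transpose_sum[OF less.prems 2(1-4)] 2(5) by (simp add: k_def)
    ultimately have "shuffle_elt n p (Transposition.transpose k (Suc k) \<circ> \<rho>) \<in> aff_weyl n"
      using less.hyps by blast
    then have "areflect n (simple_root n k, 0)
        \<circ> shuffle_elt n p (Transposition.transpose k (Suc k) \<circ> \<rho>) \<in> aff_weyl n"
      using k by (intro aff_weyl.refl_comp) (auto simp: aff_simple_roots_def)
    then show ?thesis by (simp add: shuffle_elt_transpose[OF k])
  next
    case 3
    then have one: "\<rho> p = 1" by (intro shuffle_perm_last_one[OF less.prems])
    have "sum \<rho> {1..p - 1} < sum \<rho> {1..p}"
      using 3(1) one by (cases p) auto
    then have "shuffle_elt n (p - 1) \<rho> \<in> aff_weyl n"
      using less.hyps shuffle_perm_pred[OF less.prems 3(1) one] by blast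
    then have "areflect n (vneg (theta_C n), 1) \<circ> shuffle_elt n (p - 1) \<rho> \<in> aff_weyl n"
      by (intro aff_weyl.refl_comp) (auto simp: aff_simple_roots_def)
    then show ?thesis by (simp only: shuffle_elt_pred[OF less.prems 3(1) one])
  qed
qed

section \<open>Classification of abelian ideals\<close>

lemma root_ge_ev_diff:
  assumes "1 \<le> a" "a \<le> b" "b \<le> n" "vsub \<gamma> \<beta> = vsub (ev a) (ev b)"
  shows "root_ge n \<gamma> \<beta>"
proof -
  define c :: "nat \<Rightarrow> nat" where "c k = (if k \<in> {a..<b} then 1 else 0)" for k
  have "(\<Sum>k\<in>{1..n}. real (c k) * simple_root n k t) = (\<Sum>k\<in>{1..n} \<inter> {a..<b}. simple_root n k t)"
    for t by (simp add: c_def sum.inter_restrict if_distrib[of real] if_distrib[of "\<lambda>x. x * _"]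
        cong: if_cong)
  moreover have "{1..n} \<inter> {a..<b} = {a..<b}" using assms by auto
  ultimately have "vsub \<gamma> \<beta> = (\<lambda>t. \<Sum>k\<in>{1..n}. real (c k) * simple_root n k t)"
    using sum_simple_roots_telescope[OF assms(1-3)] assms(4) by simp
  then show ?thesis unfolding root_ge_def by blast
qed

lemma root_ge_double_ev_diff:
  assumes "1 \<le> j" "j \<le> n" "vsub \<gamma> \<beta> = vscale 2 (ev j)"
  shows "root_ge n \<gamma> \<beta>"
proof -
  define c :: "nat \<Rightarrow> nat" where "c k = (if k \<in> {j..<n} then 2 else 0) + (if k = n then 1 else 0)"
    for k
  have "(\<Sum>k\<in>{1..n}. real (c k) * simple_root n k t)
      = 2 * (\<Sum>k\<in>{1..n} \<inter> {j..<n}. simple_root n k t) + simple_root n n t" for t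
    using assms(1,2) by (simp add: c_def distrib_right sum.distrib sum.inter_restrict
        sum_distrib_left if_distrib[of real] if_distrib[of "\<lambda>x. x * _"] if_distrib[of "(*) 2"]
        cong: if_cong)
  moreover have "{1..n} \<inter> {j..<n} = {j..<n}" using assms by auto
  ultimately have "vsub \<gamma> \<beta> = (\<lambda>t. \<Sum>k\<in>{1..n}. real (c k) * simple_root n k t)"
    using sum_simple_roots_telescope[of j n n] assms
    by (simp add: fun_eq_iff simple_root_def vsub_def vscale_def ev_def)
  then show ?thesis unfolding root_ge_def by blast
qed

lemma height_simple_root_ge: "k \<in> {1..n} \<Longrightarrow> 1 \<le> height n (simple_root n k)"
  by (cases "k < n") (auto simp: simple_root_eq height_epair weight_def)

lemma root_ge_height_less:
  assumes "root_ge n \<gamma> \<beta>" "\<gamma> \<noteq> \<beta>"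
  shows "height n \<beta> < height n \<gamma>"
proof -
  obtain c where c: "vsub \<gamma> \<beta> = (\<lambda>j. \<Sum>i\<in>{1..n}. real (c i) * simple_root n i j)"
    using assms(1) unfolding root_ge_def by blast
  have "height n \<gamma> - height n \<beta> = height n (vsub \<gamma> \<beta>)"
    by (simp add: height_def inner_C_def vsub_def algebra_simps sum_subtractf)
  also have "\<dots> = (\<Sum>i\<in>{1..n}. real (c i) * height n (simple_root n i))"
    unfolding c height_def inner_C_def sum_distrib_left
    by (subst sum.swap) (simp add: mult.left_commute)
  finally have diff:
    "height n \<gamma> - height n \<beta> = (\<Sum>i\<in>{1..n}. real (c i) * height n (simple_root n i))" .
  obtain i where i: "i \<in> {1..n}" "c i \<noteq> 0"
  proof (rule ccontr)
    assume "\<not> thesis"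
    then have "\<forall>i\<in>{1..n}. c i = 0" using that by blast
    then have "vsub \<gamma> \<beta> = (\<lambda>j. 0)" unfolding c by simp
    then show False using assms(2) by (auto simp: fun_eq_iff vsub_def)
  qed
  have "0 < real (c i) * height n (simple_root n i)"
    using i height_simple_root_ge[OF i(1)] by simp
  also have "\<dots> \<le> (\<Sum>i\<in>{1..n}. real (c i) * height n (simple_root n i))"
    using i(1) height_simple_root_ge by (intro member_le_sum) fastforce+
  finally show ?thesis using diff by linarith
qed

lemma finite_pos_roots_C: "finite (pos_roots_C n)"
  using finite_roots_C[of n] unfolding pos_roots_C_eq by simp

lemma epair_eq_iff:
  assumes "i \<le> j" "a \<le> b"
  shows "epair 1 i 1 j = epair 1 a 1 b \<longleftrightarrow> i = a \<and> j = b"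
proof
  assume eq: "epair 1 i 1 j = epair 1 a 1 b"
  have "epair 1 i 1 j t \<noteq> 0 \<longleftrightarrow> t = i \<or> t = j" "epair 1 a 1 b t \<noteq> 0 \<longleftrightarrow> t = a \<or> t = b" for t
    by (simp_all add: epair_apply)
  then have "t = i \<or> t = j \<longleftrightarrow> t = a \<or> t = b" for t
    using eq by metis
  then show "i = a \<and> j = b" using assms by (metis le_antisym)
qed simp

lemma epair_in_pos_roots_C: "i \<in> {1..n} \<Longrightarrow> j \<in> {1..n} \<Longrightarrow> epair 1 i 1 j \<in> pos_roots_C n"
  by (auto simp: pos_roots_C_eq height_epair weight_def intro!: epair_in_roots_C)

lemma shuffle_ideal_mem_iff: "i \<le> j \<Longrightarrow> epair 1 i 1 j \<in> shuffle_ideal n p \<rho> \<longleftrightarrow> shuffle_pair n p \<rho> i j"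
proof
  assume "i \<le> j" "epair 1 i 1 j \<in> shuffle_ideal n p \<rho>"
  moreover obtain a b where "epair 1 i 1 j = epair 1 a 1 b" "shuffle_pair n p \<rho> a b"
    using calculation(2) unfolding shuffle_ideal_def by blast
  moreover have "a \<le> b" using calculation(4) by (auto simp: shuffle_pair_def)
  ultimately show "shuffle_pair n p \<rho> i j" using epair_eq_iff by blast
qed (auto simp: shuffle_ideal_def)

lemma abelian_ideal_memE:
  assumes ab: "abelian_ideal n I" and "\<beta> \<in> I"
  obtains i j where "1 \<le> i" "i \<le> j" "j \<le> n" "\<beta> = epair 1 i 1 j"
proof -
  have "\<beta> \<in> pos_roots_C n" using assms unfolding abelian_ideal_def by auto
  then consider (diff) i j where "\<beta> = vsub (ev i) (ev j)" "1 \<le> i" "i < j" "j \<le> n"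
    | (sum) i j where "\<beta> = epair 1 i 1 j" "1 \<le> i" "i < j" "j \<le> n"
    | (double) i where "\<beta> = epair 1 i 1 i" "i \<in> {1..n}"
    unfolding pos_roots_C_def epair_eqs(2,4) by blast
  then show ?thesis
  proof cases
    case diff
    \<comment> \<open>e_i + e_j lies above \<beta> = e_i - e_j, but the two add up to the root 2e_i\<close>
    have "vadd (ev i) (ev j) \<in> pos_roots_C n" using diff unfolding pos_roots_C_def by blast
    moreover have "root_ge n (vadd (ev i) (ev j)) \<beta>"
      using diff by (intro root_ge_double_ev_diff[of j])
        (auto simp: fun_eq_iff vsub_def vadd_def vscale_def ev_def)
    ultimately have "vadd (ev i) (ev j) \<in> I" using ab \<open>\<beta> \<in> I\<close> unfolding abelian_ideal_def by blast
    then have "vadd \<beta> (vadd (ev i) (ev j)) \<notin> roots_C n"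
      using ab \<open>\<beta> \<in> I\<close> unfolding abelian_ideal_def by blast
    moreover have "vadd \<beta> (vadd (ev i) (ev j)) = vscale 2 (ev i)"
      using diff by (auto simp: fun_eq_iff vsub_def vadd_def vscale_def ev_def)
    ultimately show ?thesis using diff unfolding roots_C_def by auto
  qed (use that in \<open>auto intro: less_imp_le\<close>)
qed

lemma shuffle_perm_Suc:
  assumes v: "shuffle_perm n p \<rho>" and "p < n" and lt: "\<And>k. k \<in> {1..p} \<Longrightarrow> \<rho> (Suc p) < \<rho> k"
  shows "shuffle_perm n (Suc p) \<rho>"
proof -
  note \<rho> = shuffle_permD[OF v]
  have "\<rho> j < \<rho> i" if "1 \<le> i" "i < j" "j \<le> Suc p" for i j
    using \<rho>(5)[of i j] lt[of i] that by (cases "j = Suc p") auto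
  then show ?thesis
    using assms(2) \<rho>(2,6) by (auto simp: shuffle_perm_def)
qed

lemma shuffle_ideal_Suc:
  assumes v: "shuffle_perm n p \<rho>" and "p < n" and lt: "\<And>k. k \<in> {1..p} \<Longrightarrow> \<rho> (Suc p) < \<rho> k"
  shows "shuffle_ideal n (Suc p) \<rho> = insert (epair 1 (Suc p) 1 (Suc p)) (shuffle_ideal n p \<rho>)"
proof -
  note \<rho> = shuffle_permD[OF v]
  have "shuffle_pair n (Suc p) \<rho> i j \<longleftrightarrow> shuffle_pair n p \<rho> i j \<or> (i = Suc p \<and> j = Suc p)" for i j
    using \<rho>(6)[of "Suc p" j] lt[of i] assms(2) unfolding shuffle_pair_def by (auto simp: le_Suc_eq)
  then show ?thesis unfolding shuffle_ideal_def by blast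
qed

lemma shuffle_perm_minimal_pair_adjacent:
  assumes v: "shuffle_perm n p \<rho>" and ij: "1 \<le> i" "i \<le> p" "p < j" "j \<le> n"
    and not_pair: "\<not> shuffle_pair n p \<rho> i j"
    and up_i: "1 < i \<Longrightarrow> shuffle_pair n p \<rho> (i - 1) j"
    and up_j: "shuffle_pair n p \<rho> i (j - 1)"
  shows "\<rho> j = Suc (\<rho> i)"
proof (rule ccontr)
  note \<rho> = shuffle_permD[OF v]
  have "\<rho> i \<noteq> \<rho> j" using \<rho>(3) ij by (auto dest: inj_onD)
  then have lt: "\<rho> i < \<rho> j" using not_pair ij by (auto simp: shuffle_pair_def)
  assume "\<rho> j \<noteq> Suc (\<rho> i)"
  moreover have "Suc (\<rho> i) \<in> \<rho> ` {1..n}"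
    using lt \<rho>(2) \<rho>(4)[of j] ij by (auto simp: bij_betw_def)
  ultimately obtain x where x: "x \<in> {1..n}" "\<rho> x = Suc (\<rho> i)" "x \<noteq> i" "x \<noteq> j"
    by (metis imageE n_not_Suc_n)
  consider "x < i" | "i < x" "x \<le> p" | "p < x" "x < j" | "j < x" using x(3,4) by linarith
  then show False
  proof cases
    case 1
    then have "x = i - 1 \<or> x < i - 1" by linarith
    moreover have "i - 1 \<le> p" using ij by simp
    ultimately have "\<rho> (i - 1) \<le> \<rho> x" using \<rho>(5)[of x "i - 1"] x(1) by auto
    moreover have "\<rho> j < \<rho> (i - 1)" using up_i 1 ij x(1) by (auto simp: shuffle_pair_def)
    ultimately show False using lt x(2) by simp
  next
    case 2
    then show False using \<rho>(5)[of i x] ij x(2) by simp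
  next
    case 3
    then have "x = j - 1 \<or> x < j - 1" by linarith
    moreover have "j - 1 \<le> n" using ij by simp
    ultimately have "\<rho> x \<le> \<rho> (j - 1)" using \<rho>(6)[of x "j - 1"] 3 by auto
    moreover have "\<rho> (j - 1) < \<rho> i" using up_j 3 by (auto simp: shuffle_pair_def)
    ultimately show False using x(2) by simp
  next
    case 4
    then show False using \<rho>(6)[of j x] ij x lt by simp
  qed
qed

lemma shuffle_ideal_insert:
  assumes v: "shuffle_perm n p \<rho>" and ij: "1 \<le> i" "i \<le> j" "j \<le> n"
    and not_pair: "\<not> shuffle_pair n p \<rho> i j"
    and up_i: "1 < i \<Longrightarrow> shuffle_pair n p \<rho> (i - 1) j"
    and up_j: "i < j \<Longrightarrow> shuffle_pair n p \<rho> i (j - 1)"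
  obtains p' \<rho>' where "shuffle_perm n p' \<rho>'"
    "shuffle_ideal n p' \<rho>' = insert (epair 1 i 1 j) (shuffle_ideal n p \<rho>)"
proof -
  note \<rho> = shuffle_permD[OF v]
  consider "j \<le> p" | "i \<le> p" "p < j" | "p < i" by linarith
  then show ?thesis
  proof cases
    case 1
    then show ?thesis using not_pair ij by (auto simp: shuffle_pair_def)
  next
    case 2
    have "\<rho> j = Suc (\<rho> i)"
      using 2
      by (intro shuffle_perm_minimal_pair_adjacent[OF v ij(1) 2 ij(3) not_pair up_i up_j]) auto
    then show ?thesis
      using that shuffle_perm_transpose[OF v ij(1) 2 ij(3), of "\<rho> i"]
        shuffle_ideal_transpose[OF v ij(1) 2 ij(3) refl] by auto
  next
    case 3
    have j: "j = i"
      using up_j 3 ij(2) by (cases "i = j") (auto simp: shuffle_pair_def)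
    have i: "i = Suc p"
      using up_i 3 j by (cases "i = Suc p") (auto simp: shuffle_pair_def)
    have "\<rho> (Suc p) < \<rho> k" if "k \<in> {1..p}" for k
    proof -
      have "\<rho> (Suc p) < \<rho> p" using up_i i j that by (auto simp: shuffle_pair_def)
      then show ?thesis using \<rho>(5)[of k p] that by (cases "k = p") auto
    qed
    then show ?thesis
      using that shuffle_perm_Suc[OF v] shuffle_ideal_Suc[OF v] i j ij(3) by auto
  qed
qed

lemma abelian_ideal_Diff_min:
  assumes ab: "abelian_ideal n I" and "\<beta> \<in> I" and min: "\<And>x. x \<in> I \<Longrightarrow> height n \<beta> \<le> height n x"
  shows "abelian_ideal n (I - {\<beta>})"
  unfolding abelian_ideal_def
proof (intro conjI ballI impI)
  fix x \<gamma> assume x: "x \<in> I - {\<beta>}" and \<gamma>: "\<gamma> \<in> pos_roots_C n" "root_ge n \<gamma> x"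
  have "\<gamma> \<in> I" using ab x \<gamma> unfolding abelian_ideal_def by blast
  moreover have "\<gamma> \<noteq> \<beta>"
    using root_ge_height_less[OF \<gamma>(2)] min x by force
  ultimately show "\<gamma> \<in> I - {\<beta>}" by simp
qed (use ab in \<open>auto simp: abelian_ideal_def\<close>)

lemma abelian_ideal_shuffle_ideal_insert:
  assumes ab: "abelian_ideal n I" and \<beta>: "\<beta> \<in> I"
    and v: "shuffle_perm n p \<rho>" and I': "I - {\<beta>} = shuffle_ideal n p \<rho>"
  obtains p' \<rho>' where "shuffle_perm n p' \<rho>'" "I = shuffle_ideal n p' \<rho>'"
proof -
  obtain i j where ij: "1 \<le> i" "i \<le> j" "j \<le> n" "\<beta> = epair 1 i 1 j"
    using abelian_ideal_memE[OF ab \<beta>] .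
  have above: "shuffle_pair n p \<rho> a b"
    if "1 \<le> a" "a \<le> b" "b \<le> n" "(a, b) \<noteq> (i, j)"
      "1 \<le> u" "u \<le> v" "v \<le> n" "vsub (epair 1 a 1 b) \<beta> = vsub (ev u) (ev v)" for a b u v
  proof -
    have "root_ge n (epair 1 a 1 b) \<beta>" using that(5-8) by (rule root_ge_ev_diff)
    then have "epair 1 a 1 b \<in> I"
      using ab \<beta> epair_in_pos_roots_C[of a n b] that(1-3) unfolding abelian_ideal_def by auto
    moreover have "epair 1 a 1 b \<noteq> \<beta>" using ij that(2,4) epair_eq_iff by auto
    ultimately show ?thesis using I' shuffle_ideal_mem_iff[OF that(2)] by blast
  qed
  have "\<not> shuffle_pair n p \<rho> i j" using I' ij shuffle_ideal_mem_iff by auto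
  moreover have "shuffle_pair n p \<rho> (i - 1) j" if "1 < i"
    using that ij
    by (intro above[of _ _ "i - 1" i]) (auto simp: fun_eq_iff vsub_def epair_apply ev_def)
  moreover have "shuffle_pair n p \<rho> i (j - 1)" if "i < j"
    using that ij
    by (intro above[of _ _ "j - 1" j]) (auto simp: fun_eq_iff vsub_def epair_apply ev_def)
  ultimately obtain p' \<rho>' where "shuffle_perm n p' \<rho>'"
    "shuffle_ideal n p' \<rho>' = insert \<beta> (shuffle_ideal n p \<rho>)"
    using shuffle_ideal_insert[OF v ij(1-3)] ij(4) by metis
  moreover have "I = insert \<beta> (I - {\<beta>})" using \<beta> by blast
  ultimately show ?thesis using that I' by auto
qed

lemma abelian_ideal_shuffle_ideal:
  assumes "abelian_ideal n I"
  obtains p \<rho> where "shuffle_perm n p \<rho>" "I = shuffle_ideal n p \<rho>"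
proof -
  have "finite I" using assms finite_pos_roots_C finite_subset by (auto simp: abelian_ideal_def)
  then have "\<exists>p \<rho>. shuffle_perm n p \<rho> \<and> I = shuffle_ideal n p \<rho>"
    using assms
  proof (induction "card I" arbitrary: I)
    case 0
    then have "I = {}" by simp
    moreover have "shuffle_perm n 0 id" by (simp add: shuffle_perm_def)
    moreover have "shuffle_ideal n 0 id = {}" by (simp add: shuffle_ideal_def shuffle_pair_def)
    ultimately show ?case by blast
  next
    case (Suc N)
    then have "Min (height n ` I) \<in> height n ` I" by (intro Min_in) auto
    then obtain \<beta> where \<beta>: "\<beta> \<in> I" "height n \<beta> = Min (height n ` I)" by auto
    then have min: "height n \<beta> \<le> height n x" if "x \<in> I" for x
      using Suc.prems(1) that by simp
    have "N = card (I - {\<beta>})" using Suc.hyps(2) Suc.prems(1) \<beta>(1) by simp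
    then obtain p \<rho> where "shuffle_perm n p \<rho>" "I - {\<beta>} = shuffle_ideal n p \<rho>"
      using Suc.hyps(1) Suc.prems(1) abelian_ideal_Diff_min[OF Suc.prems(2) \<beta>(1) min] by blast
    then show ?case by (metis abelian_ideal_shuffle_ideal_insert[OF Suc.prems(2) \<beta>(1)])
  qed
  then show ?thesis using that by blast
qed

section \<open>The element w_I\<close>

lemma inv_w_ideal_shuffle_ideal:
  assumes n: "1 \<le> n" and v: "shuffle_perm n p \<rho>"
  shows "inv (w_ideal n (shuffle_ideal n p \<rho>)) = shuffle_elt n p \<rho>"
proof -
  let ?E = "shuffle_elt n p \<rho>"
  have E: "?E \<in> aff_weyl n" using shuffle_elt_in_aff_weyl[OF v] .
  then have inv_inv: "inv (inv ?E) = ?E" using aff_weyl_bij[OF _ n] by (simp add: inv_inv_eq)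
  have w: "inv ?E \<in> aff_weyl n \<and> inv_set n (inv ?E) = {(vneg \<beta>, 1) | \<beta>. \<beta> \<in> shuffle_ideal n p \<rho>}"
    using aff_weyl_inv[OF E n] shuffle_elt_inverted_roots[OF v] by (simp add: inv_set_def inv_inv)
  have "w_ideal n (shuffle_ideal n p \<rho>) = inv ?E"
    unfolding w_ideal_def
  proof (rule the_equality)
    fix w assume "w \<in> aff_weyl n \<and> inv_set n w = {(vneg \<beta>, 1) | \<beta>. \<beta> \<in> shuffle_ideal n p \<rho>}"
    then show "w = inv ?E" using aff_weyl_inv_set_inj[OF n] w by auto
  qed (rule w)
  then show ?thesis using inv_inv by simp
qed

lemma shuffle_elt_neg_theta_2delta:
  assumes n: "1 \<le> n" and v: "shuffle_perm n p \<rho>"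
  shows "shuffle_elt n p \<rho> (vneg (theta_C n), 2) = (simple_root n n, 0) \<longleftrightarrow> 1 \<le> p \<and> \<rho> 1 = n"
proof -
  have "shuffle_elt n p \<rho> (vneg (theta_C n), 2)
    = (epair (- neg_upto p 1) (\<rho> 1) (- neg_upto p 1) (\<rho> 1), 2 - 2 * ind_upto p 1)"
    using shuffle_elt_epair[OF v, of 1 1 "-1" "-1" 2] n by (simp add: theta_C_eq vneg_epair)
  then show ?thesis
    using epair_eq_iff[of "\<rho> 1" "\<rho> 1" n n]
    by (simp add: simple_root_eq neg_upto_def ind_upto_def)
qed

lemma shuffle_pair_1_n_iff:
  assumes n: "1 \<le> n" and v: "shuffle_perm n p \<rho>"
  shows "shuffle_pair n p \<rho> 1 n \<longleftrightarrow> 1 \<le> p \<and> \<rho> 1 = n"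
proof
  note \<rho> = shuffle_permD[OF v]
  assume pair: "shuffle_pair n p \<rho> 1 n"
  then have p: "1 \<le> p" by (auto simp: shuffle_pair_def)
  have "n \<in> \<rho> ` {1..n}" using \<rho>(2) n by (simp add: bij_betw_def)
  then obtain x where x: "x \<in> {1..n}" "\<rho> x = n" by (metis imageE)
  have "\<rho> 1 \<le> n" using \<rho>(4)[of 1] n by simp
  have "x = 1"
  proof (rule ccontr)
    assume "x \<noteq> 1"
    show False
    proof (cases "x \<le> p")
      case True
      then show False using \<rho>(5)[of 1 x] x \<open>x \<noteq> 1\<close> \<open>\<rho> 1 \<le> n\<close> by simp
    next
      case False
      then have "\<rho> n < \<rho> 1" using pair x by (auto simp: shuffle_pair_def)
      moreover have "\<rho> x \<le> \<rho> n" using \<rho>(6)[of x n] False x by (cases "x = n") auto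
      ultimately show False using x \<open>\<rho> 1 \<le> n\<close> by simp
    qed
  qed
  then show "1 \<le> p \<and> \<rho> 1 = n" using x p by simp
next
  note \<rho> = shuffle_permD[OF v]
  assume p: "1 \<le> p \<and> \<rho> 1 = n"
  have "\<rho> n < \<rho> 1" if "p < n"
  proof -
    have "\<rho> n \<noteq> \<rho> 1" using inj_onD[OF \<rho>(3), of n 1] that p by auto
    moreover have "\<rho> n \<le> n" using \<rho>(4)[of n] n by simp
    ultimately show ?thesis using p by simp
  qed
  then show "shuffle_pair n p \<rho> 1 n" using p n by (cases "n \<le> p") (simp_all add: shuffle_pair_def)
qed

theorem proposition8p1:
  fixes n :: nat and I :: "vec set"
  assumes "n \<ge> 2" and "abelian_ideal n I"
  shows "I \<in> I_ab n (simple_root n n) \<longleftrightarrow> alpha_1n n \<in> I"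
proof -
  have n: "1 \<le> n" using assms(1) by simp
  obtain p \<rho> where v: "shuffle_perm n p \<rho>" and I: "I = shuffle_ideal n p \<rho>"
    using abelian_ideal_shuffle_ideal[OF assms(2)] .
  have "I \<in> I_ab n (simple_root n n)
      \<longleftrightarrow> shuffle_elt n p \<rho> (vneg (theta_C n), 2) = (simple_root n n, 0)"
    using assms(2) by (simp add: I_ab_def I inv_w_ideal_shuffle_ideal[OF n v])
  also have "\<dots> \<longleftrightarrow> shuffle_pair n p \<rho> 1 n"
    by (simp only: shuffle_elt_neg_theta_2delta[OF n v] shuffle_pair_1_n_iff[OF n v])
  also have "\<dots> \<longleftrightarrow> alpha_1n n \<in> I"
    using n by (simp add: I alpha_1n_eq shuffle_ideal_mem_iff)
  finally show ?thesis .
qed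

end
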